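(* Let $\epsilon>0$. If $A=(a_n)_{n\ge1}$ is a monotonically increasing sequence of positive integers which is $\epsilon$-complete, then there is a constant $C$ such that $a_n\le\sum_{i\le\epsilon n+C}a_i$ for all positive integers $n$.
   Context: For a sequence $A$ of positive integers, $\Sigma(A)$ is the set of sums of distinct terms of $A$; $A$ is complete if every sufficiently large positive integer lies in $\Sigma(A)$. $A$ is $\epsilon$-complete if every subsequence $A'$ of $A$ with $|A'\cap[n]|\ge\epsilon|A\cap[n]|$ for all sufficiently large $n$ is complete. *)

theory Defs
  imports Complex_Main
begin

text \<open>A sequence A = (a_n)_{n>=1} is a function a :: nat => nat, only the values at
  indices n >= 1 being relevant. A subsequence A' is given by a set I of indices
  (I \<subseteq> {1..}). Terms are counted with multiplicity (by index).\<close>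

definition subsums :: "(nat \<Rightarrow> nat) \<Rightarrow> nat set \<Rightarrow> nat set" where
  "subsums a I = {(\<Sum>i\<in>F. a i) | F. finite F \<and> F \<subseteq> I}"

definition complete_seq :: "(nat \<Rightarrow> nat) \<Rightarrow> nat set \<Rightarrow> bool" where
  "complete_seq a I \<longleftrightarrow> (\<exists>N. \<forall>m\<ge>N. m \<in> subsums a I)"

definition count_le :: "(nat \<Rightarrow> nat) \<Rightarrow> nat set \<Rightarrow> nat \<Rightarrow> nat" where
  "count_le a I n = card {i \<in> I. a i \<le> n}"

definition eps_complete :: "real \<Rightarrow> (nat \<Rightarrow> nat) \<Rightarrow> bool" where
  "eps_complete \<epsilon> a \<longleftrightarrow>
     (\<forall>I. I \<subseteq> {1..} \<longrightarrow>
        (\<exists>N. \<forall>n\<ge>N. real (count_le a I n) \<ge> \<epsilon> * real (count_le a {1..} n))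
        \<longrightarrow> complete_seq a I)"

end

theory Submission
  imports Defs
begin

text \<open>Suppose no constant C works. Then one finds indices 0 = n_0 < n_1 < n_2 < ... and
  cut-offs n_k \<le> s_k < n_{k+1} with s_k - n_k \<ge> \<epsilon> n_{k+1} and a_1 + ... + a_{s_k} < a_{n_{k+1}} - 1.
  Deleting the index gaps (s_k, n_{k+1}) leaves a subsequence that still has relative
  density \<epsilon> in every initial segment, because each gap is paid for by the
  preceding block (n_k, s_k]. But no sum of distinct terms of this subsequence equals
  a_{n_{k+1}} - 1: terms of index \<ge> n_{k+1} are too large, and all the others together
  are too small. So the subsequence is not complete, contradicting \<epsilon>-completeness.\<close>

lemma nat_interval_eq_floor:
  assumes "(x::real) \<ge> 0"
  shows "{i::nat. 1 \<le> i \<and> real i \<le> x} = {1..nat \<lfloor>x\<rfloor>}"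
  using assms by (auto simp: le_nat_iff le_floor_iff)

lemma initial_segment_eq_atLeastAtMost:
  fixes S :: "nat set"
  assumes "finite S" "S \<subseteq> {1..}"
    and down_closed: "\<And>i j. j \<in> S \<Longrightarrow> 1 \<le> i \<Longrightarrow> i \<le> j \<Longrightarrow> i \<in> S"
  shows "\<exists>M. S = {1..M}"
proof (cases "S = {}")
  case True
  then show ?thesis by (intro exI[of _ 0]) auto
next
  case False
  then have "Max S \<in> S" using \<open>finite S\<close> by simp
  then have "S = {1..Max S}"
    using assms by (auto intro: down_closed[of "Max S"])
  then show ?thesis by blast
qed

lemma count_le_dense_if_prefixes_dense:
  fixes a :: "nat \<Rightarrow> nat"
  assumes mono: "\<forall>m n. 1 \<le> m \<longrightarrow> m \<le> n \<longrightarrow> a m \<le> a n"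
    and "I \<subseteq> {1..}"
    and dense: "\<And>M. \<epsilon> * real M \<le> real (card (I \<inter> {1..M}))"
  shows "\<epsilon> * real (count_le a {1..} x) \<le> real (count_le a I x)"
proof (cases "finite {i \<in> {1..}. a i \<le> x}")
  case True
  moreover have "i \<in> {i \<in> {1..}. a i \<le> x}"
    if "j \<in> {i \<in> {1..}. a i \<le> x}" "1 \<le> i" "i \<le> j" for i j
    using that mono by (auto intro: le_trans)
  ultimately obtain M where M: "{i \<in> {1..}. a i \<le> x} = {1..M}"
    using initial_segment_eq_atLeastAtMost[of "{i \<in> {1..}. a i \<le> x}"] by auto
  then have "{i \<in> I. a i \<le> x} = I \<inter> {1..M}" using \<open>I \<subseteq> {1..}\<close> by blast
  then show ?thesis unfolding count_le_def M using dense[of M] by simp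
next
  case False
  then show ?thesis unfolding count_le_def by simp
qed

lemma not_in_subsums_across_gap:
  fixes a :: "nat \<Rightarrow> nat"
  assumes mono: "\<forall>m n. 1 \<le> m \<longrightarrow> m \<le> n \<longrightarrow> a m \<le> a n"
    and "I \<subseteq> {1..}" and gap: "I \<inter> {T<..<N} = {}" and "1 \<le> N"
    and below: "(\<Sum>i=1..T. a i) < m" and above: "m < a N"
  shows "m \<notin> subsums a I"
proof
  assume "m \<in> subsums a I"
  then obtain F where F: "finite F" "F \<subseteq> I" "m = (\<Sum>i\<in>F. a i)"
    unfolding subsums_def by blast
  show False
  proof (cases "\<exists>i\<in>F. N \<le> i")
    case True
    then obtain i where "i \<in> F" "N \<le> i" by blast
    then have "a N \<le> a i" using mono \<open>1 \<le> N\<close> by blast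
    also have "a i \<le> m" using F \<open>i \<in> F\<close> by (auto intro: member_le_sum)
    finally show False using above by simp
  next
    case False
    then have "F \<subseteq> {1..T}" using F(2) gap \<open>I \<subseteq> {1..}\<close> by fastforce
    then have "m \<le> (\<Sum>i=1..T. a i)" unfolding F(3) by (intro sum_mono2) auto
    then show False using below by simp
  qed
qed

definition indices_outside_gaps :: "(nat \<Rightarrow> nat) \<Rightarrow> (nat \<Rightarrow> nat) \<Rightarrow> nat set" where
  "indices_outside_gaps s n = {1..} - (\<Union>k. {s k<..<n (Suc k)})"

lemma strict_mono_if_interleaved:
  fixes n s :: "nat \<Rightarrow> 'a::order"
  assumes "\<And>k. n k \<le> s k" "\<And>k. s k < n (Suc k)"
  shows "strict_mono n"
  unfolding strict_mono_Suc_iff using assms le_less_trans by blast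

lemma block_subset_indices_outside_gaps:
  assumes "\<And>k. n k \<le> s k" "\<And>k. s k < n (Suc k)"
  shows "{n k<..s k} \<subseteq> indices_outside_gaps s n"
proof
  fix i assume i: "i \<in> {n k<..s k}"
  have mono_n: "strict_mono n" using assms by (rule strict_mono_if_interleaved)
  have "i \<notin> {s j<..<n (Suc j)}" for j
  proof (cases j k rule: linorder_cases)
    case less
    then have "n (Suc j) \<le> n k" using mono_n by (simp add: strict_mono_less_eq)
    then show ?thesis using i by simp
  next
    case greater
    then have "n (Suc k) \<le> n j" using mono_n by (simp add: strict_mono_less_eq)
    then show ?thesis using i assms[of k] assms(1)[of j] by simp
  qed (use i in simp)
  then show "i \<in> indices_outside_gaps s n"
    using i unfolding indices_outside_gaps_def by auto
qed

lemma indices_outside_gaps_dense: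
  fixes \<epsilon> :: real
  assumes "0 \<le> \<epsilon>" "n 0 = 0"
    and le_s: "\<And>k. n k \<le> s k" and s_less: "\<And>k. s k < n (Suc k)"
    and long_blocks: "\<And>k. \<epsilon> * real (n (Suc k)) \<le> real (s k) - real (n k)"
  shows "\<epsilon> * real M \<le> real (card (indices_outside_gaps s n \<inter> {1..M}))"
proof -
  let ?I = "indices_outside_gaps s n"
  have "\<epsilon> * real (n 1) \<le> real (s 0)" "real (s 0) < real (n 1)"
    using long_blocks[of 0] s_less[of 0] \<open>n 0 = 0\<close> by simp_all
  then have "\<epsilon> * real (n 1) < 1 * real (n 1)" by linarith
  then have "\<epsilon> \<le> 1" by (meson less_imp_le mult_right_less_imp_less of_nat_0_le_iff)
  have "\<forall>M \<le> n k. \<epsilon> * real M \<le> real (card (?I \<inter> {1..M}))" for k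
  proof (induction k)
    case 0
    then show ?case using \<open>n 0 = 0\<close> by simp
  next
    case (Suc k)
    show ?case
    proof (intro allI impI)
      fix M assume M: "M \<le> n (Suc k)"
      show "\<epsilon> * real M \<le> real (card (?I \<inter> {1..M}))"
      proof (cases "M \<le> n k")
        case True
        then show ?thesis using Suc.IH by simp
      next
        case False
        let ?B = "{n k<..min M (s k)}"
        have sub: "?I \<inter> {1..n k} \<union> ?B \<subseteq> ?I \<inter> {1..M}"
          using False block_subset_indices_outside_gaps[of n s k, OF le_s s_less] by auto
        moreover have "card (?I \<inter> {1..n k} \<union> ?B) = card (?I \<inter> {1..n k}) + card ?B"
          by (intro card_Un_disjoint) auto
        ultimately have card_M: "card (?I \<inter> {1..n k}) + (min M (s k) - n k) \<le> card (?I \<inter> {1..M})"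
          using card_mono[OF _ sub] by simp
        have IH: "\<epsilon> * real (n k) \<le> real (card (?I \<inter> {1..n k}))" using Suc.IH by simp
        show ?thesis
        proof (cases "M \<le> s k")
          case True
          have "\<epsilon> * (real M - real (n k)) \<le> real M - real (n k)"
            using \<open>\<epsilon> \<le> 1\<close> \<open>0 \<le> \<epsilon>\<close> False by (intro mult_left_le_one_le) auto
          then show ?thesis using IH card_M True False by (simp add: algebra_simps)
        next
          case False
          have "\<epsilon> * real M \<le> \<epsilon> * real (n (Suc k))" using M \<open>0 \<le> \<epsilon>\<close> by (simp add: mult_left_mono)
          also have "\<dots> \<le> real (s k - n k)" using long_blocks[of k] le_s[of k] by simp
          also have "\<dots> \<le> real (card (?I \<inter> {1..M}))" using card_M False by simp
          finally show ?thesis .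
        qed
      qed
    qed
  qed
  moreover have "M \<le> n M"
    using strict_mono_if_interleaved[of n s, OF le_s s_less] by (rule seq_suble)
  ultimately show ?thesis by blast
qed

text \<open>The violation is used with C = b + 2, and s is taken one below the last index
  \<lfloor>\<epsilon> n + b + 2\<rfloor> of the violating sum; dropping that last (positive) term makes the
  bound strict.\<close>

lemma block_before_violation:
  fixes a :: "nat \<Rightarrow> nat" and \<epsilon> :: real
  assumes "0 \<le> \<epsilon>" and pos: "\<forall>n\<ge>1. a n > 0" and "1 \<le> n"
    and violation: "(\<Sum>i\<in>{i. 1 \<le> i \<and> real i \<le> \<epsilon> * real n + (real b + 2)}. a i) < a n"
  shows "\<exists>s. b \<le> s \<and> s < n \<and> \<epsilon> * real n \<le> real s - real b \<and> Suc (\<Sum>i=1..s. a i) < a n"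
proof -
  define x where "x = \<epsilon> * real n + (real b + 2)"
  define t where "t = nat \<lfloor>x\<rfloor>"
  have "0 \<le> x" using \<open>0 \<le> \<epsilon>\<close> unfolding x_def by simp
  then have sum_t: "(\<Sum>i=1..t. a i) < a n"
    using violation unfolding t_def x_def[symmetric] nat_interval_eq_floor[OF \<open>0 \<le> x\<close>] by simp
  have "b + 2 \<le> t" unfolding t_def x_def using \<open>0 \<le> \<epsilon>\<close> by (intro le_nat_floor) simp
  have "x < real t + 1" unfolding t_def using \<open>0 \<le> x\<close> by linarith
  have "t < n"
  proof (rule ccontr)
    assume "\<not> t < n"
    then have "a n \<le> (\<Sum>i=1..t. a i)" using \<open>1 \<le> n\<close> by (intro member_le_sum) auto
    then show False using sum_t by simp
  qed
  have "(\<Sum>i=1..t. a i) = (\<Sum>i=1..t - 1. a i) + a t"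
    using \<open>b + 2 \<le> t\<close> by (cases t) auto
  moreover have "a t > 0" using pos \<open>b + 2 \<le> t\<close> by simp
  ultimately have "Suc (\<Sum>i=1..t - 1. a i) < a n" using sum_t by linarith
  moreover have "\<epsilon> * real n \<le> real (t - 1) - real b"
    using \<open>x < real t + 1\<close> \<open>b + 2 \<le> t\<close> unfolding x_def by simp
  ultimately show ?thesis using \<open>b + 2 \<le> t\<close> \<open>t < n\<close> by (intro exI[of _ "t - 1"]) auto
qed

lemma gap_sequence_if_always_violated:
  fixes a :: "nat \<Rightarrow> nat" and \<epsilon> :: real
  assumes "0 \<le> \<epsilon>" and pos: "\<forall>n\<ge>1. a n > 0"
    and violation: "\<And>C. \<exists>n\<ge>1. (\<Sum>i\<in>{i. 1 \<le> i \<and> real i \<le> \<epsilon> * real n + C}. a i) < a n"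
  obtains n s :: "nat \<Rightarrow> nat"
  where "n 0 = 0" "\<And>k. n k \<le> s k" "\<And>k. s k < n (Suc k)"
    "\<And>k. \<epsilon> * real (n (Suc k)) \<le> real (s k) - real (n k)"
    "\<And>k. Suc (\<Sum>i=1..s k. a i) < a (n (Suc k))"
proof -
  have "\<exists>n' s. b \<le> s \<and> s < n' \<and> \<epsilon> * real n' \<le> real s - real b \<and> Suc (\<Sum>i=1..s. a i) < a n'"
    for b using violation[of "real b + 2"] block_before_violation[OF \<open>0 \<le> \<epsilon>\<close> pos] by blast
  then obtain next_index cut where step:
    "\<And>b. b \<le> cut b \<and> cut b < next_index b \<and> \<epsilon> * real (next_index b) \<le> real (cut b) - real b
       \<and> Suc (\<Sum>i=1..cut b. a i) < a (next_index b)"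
    by metis
  define n where "n k = (next_index ^^ k) 0" for k
  show ?thesis
    by (rule that[of n "\<lambda>k. cut (n k)"]) (use step in \<open>simp_all add: n_def\<close>)
qed

theorem theorem4p1:
  fixes \<epsilon> :: real and a :: "nat \<Rightarrow> nat"
  assumes "\<epsilon> > 0"
    and "\<forall>n\<ge>1. a n > 0"
    and "\<forall>m n. 1 \<le> m \<longrightarrow> m \<le> n \<longrightarrow> a m \<le> a n"
    and "eps_complete \<epsilon> a"
  shows "\<exists>C::real. \<forall>n\<ge>1. a n \<le> (\<Sum>i\<in>{i. 1 \<le> i \<and> real i \<le> \<epsilon> * real n + C}. a i)"
proof (rule ccontr)
  have "0 \<le> \<epsilon>" using assms(1) by simp
  assume "\<not> ?thesis"
  then have "\<exists>n\<ge>1. (\<Sum>i\<in>{i. 1 \<le> i \<and> real i \<le> \<epsilon> * real n + C}. a i) < a n" for C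
    by (auto simp: not_le)
  then obtain n s where gaps: "n 0 = 0" "\<And>k. n k \<le> s k" "\<And>k. s k < n (Suc k)"
      "\<And>k. \<epsilon> * real (n (Suc k)) \<le> real (s k) - real (n k)"
    and sum_below: "\<And>k. Suc (\<Sum>i=1..s k. a i) < a (n (Suc k))"
    by (rule gap_sequence_if_always_violated[OF \<open>0 \<le> \<epsilon>\<close> assms(2)]) (rule that)
  define I where "I = indices_outside_gaps s n"
  have "I \<subseteq> {1..}" unfolding I_def indices_outside_gaps_def by blast
  have "\<epsilon> * real M \<le> real (card (I \<inter> {1..M}))" for M
    using \<open>0 \<le> \<epsilon>\<close> gaps unfolding I_def by (rule indices_outside_gaps_dense)
  then have "\<epsilon> * real (count_le a {1..} x) \<le> real (count_le a I x)" for x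
    by (rule count_le_dense_if_prefixes_dense[OF assms(3) \<open>I \<subseteq> {1..}\<close>])
  then have "complete_seq a I"
    using assms(4) \<open>I \<subseteq> {1..}\<close> unfolding eps_complete_def by blast
  then obtain N where N: "\<And>m. N \<le> m \<Longrightarrow> m \<in> subsums a I"
    unfolding complete_seq_def by blast
  have "N \<le> s N"
    using seq_suble[OF strict_mono_if_interleaved[of n s, OF gaps(2,3)]] gaps(2) le_trans by blast
  also have "s N \<le> (\<Sum>i=1..s N. a i)"
    using sum_mono[of "{1..s N}" "\<lambda>_. 1" a] assms(2) by (simp add: Suc_le_eq)
  finally have "a (n (Suc N)) - 1 \<in> subsums a I" using N sum_below[of N] by simp
  moreover have "a (n (Suc N)) - 1 \<notin> subsums a I"
    using sum_below[of N] gaps(3)[of N]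
    by (intro not_in_subsums_across_gap[OF assms(3) \<open>I \<subseteq> {1..}\<close>, of "s N" "n (Suc N)"])
      (auto simp: I_def indices_outside_gaps_def)
  ultimately show False by contradiction
qed

end
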